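(* Let $(E,\mathcal{D},\rho)$ and $(E,\mathcal{D},\phi)$ be U-matroids on the same lattice such that $\phi$ dominates $\rho$ (i.e., $\phi(S)\ge\rho(S)$ for all $S\in\mathcal{D}$), and let $a\in E$ with $\{a\}\notin\mathcal{D}$. Then the generous atom extension $\phi_a$ of $\phi$ to $\mathcal{D}[a]$ dominates every lattice extension of $\rho$ to $\mathcal{D}[a]$; that is, if $(E,\mathcal{D}[a],\rho')$ is a U-matroid with $\rho'|_\mathcal{D}=\rho$, then $\phi_a(S)\ge\rho'(S)$ for all $S\in\mathcal{D}[a]$.
   Context: An accessible distributive lattice on a finite set $E$ is a family $\mathcal{D}\subseteq 2^E$ containing $\emptyset$ and $E$, closed under union and intersection, such that every nonempty $A\in\mathcal{D}$ contains some $x$ with $A\setminus\{x\}\in\mathcal{D}$. A U-matroid is a triple $(E,\mathcal{D},\rho)$ with $\mathcal{D}$ an accessible distributive lattice and $\rho:\mathcal{D}\to\mathbb{N}$ satisfying $\rho(\emptyset)=0$; $\rho(A)\le\rho(B)$ whenever $A\subseteq B$; $\rho(A)+\rho(B)\ge\rho(A\cup B)+\rho(A\cap B)$; and $\rho(A\cup\{e\})-\rho(A)\le1$ whenever $A,A\cup\{e\}\in\mathcal{D}$. For $S\subseteq E$, $\sup_\mathcal{D}(S)=\bigcap\{B\in\mathcal{D}:B\supseteq S\}$. For $a\in E$ with $\{a\}\notin\mathcal{D}$, let $\mathcal{D}[a]=\mathcal{D}\cup\{S\cup\{a\}:S\in\mathcal{D}\}$. The generous atom extension $\phi_a:\mathcal{D}[a]\to\mathbb{N}$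 of $\phi$ is: $\phi_a(S)=\phi(S)$ if $S\in\mathcal{D}$; if $S\notin\mathcal{D}$ (so $S\setminus\{a\}\in\mathcal{D}$), $\phi_a(S)=\phi(S\setminus\{a\})$ when $\phi(S\setminus\{a\})=\phi(\sup_\mathcal{D}(S))$, and $\phi_a(S)=\phi(S\setminus\{a\})+1$ otherwise. *)

theory Defs
  imports Main
begin

definition accessible_distributive_lattice :: "'a set \<Rightarrow> 'a set set \<Rightarrow> bool" where
  "accessible_distributive_lattice E D \<longleftrightarrow>
     finite E \<and> D \<subseteq> Pow E \<and> {} \<in> D \<and> E \<in> D \<and>
     (\<forall>A\<in>D. \<forall>B\<in>D. A \<union> B \<in> D \<and> A \<inter> B \<in> D) \<and>
     (\<forall>A\<in>D. A \<noteq> {} \<longrightarrow> (\<exists>x\<in>A. A - {x} \<in> D))"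

definition U_matroid :: "'a set \<Rightarrow> 'a set set \<Rightarrow> ('a set \<Rightarrow> nat) \<Rightarrow> bool" where
  "U_matroid E D \<rho> \<longleftrightarrow>
     accessible_distributive_lattice E D \<and>
     \<rho> {} = 0 \<and>
     (\<forall>A\<in>D. \<forall>B\<in>D. A \<subseteq> B \<longrightarrow> \<rho> A \<le> \<rho> B) \<and>
     (\<forall>A\<in>D. \<forall>B\<in>D. \<rho> A + \<rho> B \<ge> \<rho> (A \<union> B) + \<rho> (A \<inter> B)) \<and>
     (\<forall>A\<in>D. \<forall>e. insert e A \<in> D \<longrightarrow> \<rho> (insert e A) \<le> \<rho> A + 1)"

definition sup_lat :: "'a set set \<Rightarrow> 'a set \<Rightarrow> 'a set" where
  "sup_lat D S = \<Inter> {B \<in> D. S \<subseteq> B}"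

definition atom_ext :: "'a set set \<Rightarrow> 'a \<Rightarrow> 'a set set" where
  "atom_ext D a = D \<union> {insert a S | S. S \<in> D}"

definition generous_ext :: "'a set set \<Rightarrow> ('a set \<Rightarrow> nat) \<Rightarrow> 'a \<Rightarrow> 'a set \<Rightarrow> nat" where
  "generous_ext D \<phi> a S =
     (if S \<in> D then \<phi> S
      else if \<phi> (S - {a}) = \<phi> (sup_lat D S) then \<phi> (S - {a})
      else \<phi> (S - {a}) + 1)"

end

theory Submission
  imports Defs
begin

(* For S = insert a T with T in D, the generous extension is phi T + 1 or, exactly when
   phi T = phi (sup S), phi T. Any U-matroid rank psi on D[a] dominated by phi on D stays below
   both: psi S <= psi T + 1 <= phi T + 1 by unit increase, and
   psi S <= psi (sup S) <= phi (sup S) by monotonicity, as sup S lies in D. *)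

lemma Inter_mem_if_Int_closed:
  assumes "finite F" "F \<noteq> {}" "F \<subseteq> D" "\<forall>A\<in>D. \<forall>B\<in>D. A \<inter> B \<in> D"
  shows "\<Inter>F \<in> D"
  using assms by (induction F rule: finite_ne_induct) simp_all

lemma sup_lat_mem:
  assumes "accessible_distributive_lattice E D" "S \<subseteq> E"
  shows "sup_lat D S \<in> D"
proof -
  let ?F = "{B \<in> D. S \<subseteq> B}"
  from assms have "?F \<subseteq> Pow E" "finite E" "E \<in> ?F" "\<forall>A\<in>D. \<forall>B\<in>D. A \<inter> B \<in> D"
    unfolding accessible_distributive_lattice_def by auto
  then have "\<Inter>?F \<in> D"
    by (intro Inter_mem_if_Int_closed) (auto intro: finite_subset)
  then show ?thesis
    unfolding sup_lat_def .
qed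

lemma subset_sup_lat: "S \<subseteq> sup_lat D S"
  unfolding sup_lat_def by blast

lemma subset_atom_ext: "D \<subseteq> atom_ext D a"
  unfolding atom_ext_def by blast

lemma atom_ext_not_mem_cases:
  assumes "S \<in> atom_ext D a" "S \<notin> D"
  shows "S - {a} \<in> D" "S = insert a (S - {a})"
proof -
  obtain T where "T \<in> D" "S = insert a T"
    using assms unfolding atom_ext_def by blast
  moreover have "a \<notin> T"
    using calculation assms(2) by (auto simp: insert_absorb)
  ultimately show "S - {a} \<in> D" "S = insert a (S - {a})"
    by simp_all
qed

lemma U_matroid_mono:
  assumes "U_matroid E D \<rho>" "A \<in> D" "B \<in> D" "A \<subseteq> B"
  shows "\<rho> A \<le> \<rho> B"
proof -
  have "\<forall>A\<in>D. \<forall>B\<in>D. A \<subseteq> B \<longrightarrow> \<rho> A \<le> \<rho> B"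
    using assms(1) unfolding U_matroid_def by (elim conjE)
  with assms(2-4) show ?thesis
    by blast
qed

lemma U_matroid_insert_le:
  assumes "U_matroid E D \<rho>" "A \<in> D" "insert e A \<in> D"
  shows "\<rho> (insert e A) \<le> \<rho> A + 1"
proof -
  have "\<forall>A\<in>D. \<forall>e. insert e A \<in> D \<longrightarrow> \<rho> (insert e A) \<le> \<rho> A + 1"
    using assms(1) unfolding U_matroid_def by (elim conjE)
  with assms(2,3) show ?thesis
    by blast
qed

lemma U_matroid_subset_ground:
  assumes "U_matroid E D \<rho>" "S \<in> D"
  shows "S \<subseteq> E"
proof -
  have "D \<subseteq> Pow E"
    using assms(1) unfolding U_matroid_def accessible_distributive_lattice_def by (elim conjE)
  with assms(2) show ?thesis
    by blast
qed

lemma generous_ext_dominates: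
  assumes lattice: "accessible_distributive_lattice E D"
    and \<psi>: "U_matroid E (atom_ext D a) \<psi>"
    and dominated: "\<forall>S\<in>D. \<psi> S \<le> \<phi> S"
    and S: "S \<in> atom_ext D a"
  shows "\<psi> S \<le> generous_ext D \<phi> a S"
proof (cases "S \<in> D")
  case True
  then show ?thesis
    using dominated by (simp add: generous_ext_def)
next
  case False
  define T where "T = S - {a}"
  define U where "U = sup_lat D S"
  have T: "T \<in> D" "S = insert a T"
    using atom_ext_not_mem_cases[OF S False] unfolding T_def by simp_all
  have U: "U \<in> D"
    unfolding U_def using sup_lat_mem[OF lattice U_matroid_subset_ground[OF \<psi> S]] .
  have "S \<subseteq> U"
    unfolding U_def by (rule subset_sup_lat)
  then have "\<psi> S \<le> \<psi> U"
    by (rule U_matroid_mono[OF \<psi> S subsetD[OF subset_atom_ext U]])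
  also have "\<dots> \<le> \<phi> U"
    using U dominated by blast
  finally have below_sup: "\<psi> S \<le> \<phi> U" .
  have "\<psi> S \<le> \<psi> T + 1"
    using U_matroid_insert_le[OF \<psi> subsetD[OF subset_atom_ext T(1)]] S T(2) by simp
  also have "\<dots> \<le> \<phi> T + 1"
    using T dominated by simp
  finally have below_succ: "\<psi> S \<le> \<phi> T + 1" .
  show ?thesis
    using False below_sup below_succ by (simp add: generous_ext_def T_def U_def)
qed

theorem proposition4p11:
  fixes E :: "'a set" and D :: "'a set set" and \<rho> \<phi> \<rho>' :: "'a set \<Rightarrow> nat" and a :: 'a
  assumes "U_matroid E D \<rho>"
    and "U_matroid E D \<phi>"
    and "\<forall>S\<in>D. \<rho> S \<le> \<phi> S"
    and "a \<in> E"
    and "{a} \<notin> D"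
    and "U_matroid E (atom_ext D a) \<rho>'"
    and "\<forall>S\<in>D. \<rho>' S = \<rho> S"
  shows "\<forall>S\<in>atom_ext D a. \<rho>' S \<le> generous_ext D \<phi> a S"
proof
  fix S assume "S \<in> atom_ext D a"
  moreover have "accessible_distributive_lattice E D"
    using assms(1) unfolding U_matroid_def by (elim conjE)
  moreover have "\<forall>S\<in>D. \<rho>' S \<le> \<phi> S"
    using assms(3,7) by simp
  ultimately show "\<rho>' S \<le> generous_ext D \<phi> a S"
    using generous_ext_dominates[OF _ assms(6)] by blast
qed

end
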